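(* Let $d\ge2$ and $\rho\ge1$. For every $\rho$-balanced rectangle $R\subseteq\mathbb Z^d$ and every $X\subseteq R$ we have $p^R(X)\ge\frac{p(X)}{3d\rho}\cdot\frac{|R\setminus X|}{|R|}$.
   Context: For $X\subseteq\mathbb Z^d$, $\partial X$ is the set of ordered pairs $(m,n)$ with $m\in X$, $n\notin X$, $n-m=\pm e_j$ for a standard basis vector $e_j$; $p(X):=|\partial X|$. For $R\subseteq\mathbb Z^d$, $\partial^RX:=\partial X\cap R^2$ and $p^R(X):=|\partial^RX|$. A rectangle is $\prod_{j=1}^d\{a_j,\dots,b_j\}$ with side lengths $b_j-a_j+1$; it is $\rho$-balanced if the ratio of any two side lengths is at most $\rho$. *)

theory Defs
  imports Main Complex_Main
begin

text \<open>Points of Z^d are integer lists of length d; coordinates indexed 0..d-1.\<close>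

definition lattice :: "nat \<Rightarrow> int list set" where
  "lattice d = {x. length x = d}"

definition nbr :: "nat \<Rightarrow> int list \<Rightarrow> int list \<Rightarrow> bool" where
  "nbr d m n \<longleftrightarrow> length m = d \<and>
     (\<exists>j<d. n = m[j := m ! j + 1] \<or> n = m[j := m ! j - 1])"

definition edge_boundary :: "nat \<Rightarrow> int list set \<Rightarrow> (int list \<times> int list) set" where
  "edge_boundary d X = {(m, n). m \<in> X \<and> n \<notin> X \<and> nbr d m n}"

definition perim :: "nat \<Rightarrow> int list set \<Rightarrow> nat" where
  "perim d X = card (edge_boundary d X)"

definition rel_perim :: "nat \<Rightarrow> int list set \<Rightarrow> int list set \<Rightarrow> nat" where
  "rel_perim d R X = card (edge_boundary d X \<inter> (R \<times> R))"

definition rectangle :: "nat \<Rightarrow> (nat \<Rightarrow> int) \<Rightarrow> (nat \<Rightarrow> int) \<Rightarrow> int list set" where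
  "rectangle d a b = {x. length x = d \<and> (\<forall>j<d. a j \<le> x ! j \<and> x ! j \<le> b j)}"

definition balanced :: "nat \<Rightarrow> real \<Rightarrow> (nat \<Rightarrow> int) \<Rightarrow> (nat \<Rightarrow> int) \<Rightarrow> bool" where
  "balanced d \<rho> a b \<longleftrightarrow> (\<forall>j<d. a j \<le> b j) \<and>
     (\<forall>i<d. \<forall>j<d. real_of_int (b i - a i + 1) \<le> \<rho> * real_of_int (b j - a j + 1))"

end

theory Submission
  imports Defs
begin

text \<open>
  Fix a coordinate axis \<open>j\<close> of a rectangle \<open>R\<close>. For \<open>x \<in> X\<close> and \<open>y \<in> R - X\<close>, move the
  \<open>j\<close>-th coordinate of \<open>x\<close> to that of \<open>y\<close>. If the moved point leaves \<open>X\<close>, the line through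
  \<open>x\<close> parallel to the axis meets both \<open>X\<close> and its complement, hence contains an edge of
  \<open>\<partial>\<^sup>RX\<close> in direction \<open>j\<close>; a line of length \<open>\<ell>\<close> with \<open>k\<close> points in \<open>X\<close> accounts for
  \<open>k(\<ell> - k) \<le> \<ell>\<^sup>2/4\<close> such moves. Otherwise the moved point and \<open>y\<close> form an inside/outside
  pair within one slice \<open>x\<^sub>j = t\<close>, whose boundary is disjoint from the edges in direction
  \<open>j\<close>. Induction on the dimension gives \<open>4 |X \<inter> R| |R - X| \<le> M |R| p\<^sup>R(X)\<close> when all sides
  of \<open>R\<close> are at most \<open>M\<close>. The same splitting, with the induction bound applied to the
  slices of a \<open>\<rho>\<close>-balanced rectangle, bounds the part of \<open>X\<close> on a face \<open>F\<close>:
  \<open>|X \<inter> F| |R - X| \<le> (1 + \<rho>/4) |R| p\<^sup>R(X)\<close>. An edge of \<open>\<partial>X\<close> not inside \<open>R\<close> starts on one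
  of the \<open>2d\<close> faces, so \<open>p(X) |R - X| \<le> (1 + 2d(1 + \<rho>/4)) |R| p\<^sup>R(X) \<le> 3d\<rho> |R| p\<^sup>R(X)\<close>.
\<close>

lemma int_predicate_change_above:
  assumes "P t" and "\<not> P (t + int k)"
  shows "\<exists>s. t \<le> s \<and> s < t + int k \<and> P s \<and> \<not> P (s + 1)"
  using assms(2)
proof (induction k)
  case (Suc k)
  show ?case
  proof (cases "P (t + int k)")
    case True
    with Suc.prems show ?thesis by (intro exI[of _ "t + int k"]) (auto simp: algebra_simps)
  next
    case False
    with Suc.IH show ?thesis by force
  qed
qed (use assms(1) in simp)

lemma int_predicate_change_between:
  fixes s t :: int
  assumes "P s" and "\<not> P t"
  shows "\<exists>r. min s t \<le> r \<and> r < max s t \<and> P r \<noteq> P (r + 1)"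
proof (cases "s \<le> t")
  case True
  then obtain k where "t = s + int k" by (metis zle_iff_zadd)
  with assms int_predicate_change_above[of P s k] True show ?thesis by force
next
  case False
  then obtain k where "s = t + int k" by (metis linorder_le_cases zle_iff_zadd)
  with assms int_predicate_change_above[of "Not \<circ> P" t k] False show ?thesis by force
qed

lemma four_mult_diff_le_square: "(k::nat) \<le> n \<Longrightarrow> 4 * (k * (n - k)) \<le> n\<^sup>2"
proof -
  assume "k \<le> n"
  then obtain m where n: "n = k + m" using le_Suc_ex by blast
  have "4 * (int k * int m) \<le> (int k + int m)\<^sup>2"
    using zero_le_power2[of "int k - int m"] by (simp add: power2_eq_square algebra_simps)
  then have "int (4 * (k * m)) \<le> int ((k + m)\<^sup>2)" by simp
  then show ?thesis using n by (simp only: of_nat_le_iff) simp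
qed

section \<open>Rectangles and their slices\<close>

definition rel_edge_boundary :: "nat \<Rightarrow> int list set \<Rightarrow> int list set \<Rightarrow> (int list \<times> int list) set" where
  "rel_edge_boundary d R X = edge_boundary d X \<inter> (R \<times> R)"

definition slice :: "nat \<Rightarrow> (nat \<Rightarrow> int) \<Rightarrow> (nat \<Rightarrow> int) \<Rightarrow> nat \<Rightarrow> int \<Rightarrow> int list set" where
  "slice d a b j t = rectangle d (a(j := t)) (b(j := t))"

lemma rel_perim_eq_card: "rel_perim d R X = card (rel_edge_boundary d R X)"
  by (simp add: rel_perim_def rel_edge_boundary_def)

lemma rel_edge_boundary_mono: "R' \<subseteq> R \<Longrightarrow> rel_edge_boundary d R' X \<subseteq> rel_edge_boundary d R X"
  unfolding rel_edge_boundary_def by auto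

lemma finite_rectangle: "finite (rectangle d a b)"
proof (rule finite_subset)
  show "rectangle d a b \<subseteq> {xs. set xs \<subseteq> (\<Union>j<d. {a j..b j}) \<and> length xs = d}"
    by (auto simp: rectangle_def in_set_conv_nth) blast
  show "finite {xs. set xs \<subseteq> (\<Union>j<d. {a j..b j}) \<and> length xs = d}"
    by (rule finite_lists_length_eq) auto
qed

lemma finite_rel_edge_boundary_rectangle: "finite (rel_edge_boundary d (rectangle d a b) X)"
  unfolding rel_edge_boundary_def using finite_rectangle by blast

lemma length_of_mem_rectangle: "x \<in> rectangle d a b \<Longrightarrow> length x = d"
  by (simp add: rectangle_def)

lemma coordinate_mem_interval: "j < d \<Longrightarrow> x \<in> rectangle d a b \<Longrightarrow> x ! j \<in> {a j..b j}"
  by (simp add: rectangle_def)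

lemma list_update_mem_rectangle:
  assumes "x \<in> rectangle d a b" and "a j \<le> t" and "t \<le> b j"
  shows "x[j := t] \<in> rectangle d a b"
  using assms unfolding rectangle_def
  by (cases "j < length x") (auto simp: nth_list_update list_update_beyond)

lemma rectangle_nonempty: "\<forall>i<d. a i \<le> b i \<Longrightarrow> rectangle d a b \<noteq> {}"
  by (auto simp: rectangle_def intro!: exI[of _ "map a [0..<d]"])

lemma rectangle_subsingleton:
  assumes "\<forall>i<d. a i = b i" and "x \<in> rectangle d a b" and "y \<in> rectangle d a b"
  shows "x = y"
proof (rule nth_equalityI)
  show "length x = length y" using assms by (simp add: rectangle_def)
  show "x ! i = y ! i" if "i < length x" for i
    using assms that by (auto simp: rectangle_def) (metis order_antisym)
qed

lemma slice_eq:
  assumes "j < d" and "t \<in> {a j..b j}"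
  shows "slice d a b j t = {x \<in> rectangle d a b. x ! j = t}"
proof -
  have iff: "x \<in> slice d a b j t \<longleftrightarrow> x \<in> rectangle d a b \<and> x ! j = t"
    if "length x = d" for x
  proof -
    have "(\<forall>i<d. (a(j := t)) i \<le> x ! i \<and> x ! i \<le> (b(j := t)) i) \<longleftrightarrow>
          (\<forall>i<d. a i \<le> x ! i \<and> x ! i \<le> b i) \<and> x ! j = t"
      using assms by (metis antisym atLeastAtMost_iff fun_upd_apply order_refl)
    with that show ?thesis by (simp add: slice_def rectangle_def)
  qed
  have "length x = d" if "x \<in> slice d a b j t \<or> x \<in> rectangle d a b" for x
    using that by (auto simp: slice_def rectangle_def)
  with iff show ?thesis by blast
qed

lemma mem_slice_coordinate: "j < d \<Longrightarrow> x \<in> rectangle d a b \<Longrightarrow> x \<in> slice d a b j (x ! j)"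
  by (simp add: slice_eq rectangle_def)

lemma slice_subset_rectangle: "j < d \<Longrightarrow> t \<in> {a j..b j} \<Longrightarrow> slice d a b j t \<subseteq> rectangle d a b"
  by (simp add: slice_eq)

lemma finite_slice: "finite (slice d a b j t)"
  by (simp add: slice_def finite_rectangle)

lemma disjoint_slices:
  "j < d \<Longrightarrow> s \<in> {a j..b j} \<Longrightarrow> t \<in> {a j..b j} \<Longrightarrow> s \<noteq> t \<Longrightarrow> slice d a b j s \<inter> slice d a b j t = {}"
  by (auto simp: slice_eq)

lemma rectangle_eq_UN_slices:
  assumes "j < d"
  shows "rectangle d a b = (\<Union>t\<in>{a j..b j}. slice d a b j t)"
proof (intro equalityI subsetI)
  fix x assume x: "x \<in> rectangle d a b"
  then have "x ! j \<in> {a j..b j}" and "x \<in> slice d a b j (x ! j)"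
    using assms coordinate_mem_interval mem_slice_coordinate by blast+
  then show "x \<in> (\<Union>t\<in>{a j..b j}. slice d a b j t)" by blast
qed (use slice_subset_rectangle[OF assms] in blast)

lemma list_update_mem_slice:
  assumes "j < d" and "s \<in> {a j..b j}" and "t \<in> {a j..b j}" and "x \<in> slice d a b j s"
  shows "x[j := t] \<in> slice d a b j t"
  using assms by (auto simp: slice_eq intro: list_update_mem_rectangle dest: length_of_mem_rectangle)

lemma card_slice_eq:
  assumes j: "j < d" and s: "s \<in> {a j..b j}" and t: "t \<in> {a j..b j}"
  shows "card (slice d a b j s) = card (slice d a b j t)"
proof -
  have "bij_betw (\<lambda>x. x[j := t]) (slice d a b j s) (slice d a b j t)"
  proof (rule bij_betw_byWitness[where f' = "\<lambda>x. x[j := s]"])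
    show "\<forall>x\<in>slice d a b j s. (x[j := t])[j := s] = x"
      using j s by (auto simp: slice_eq)
    show "\<forall>x\<in>slice d a b j t. (x[j := s])[j := t] = x"
      using j t by (auto simp: slice_eq)
    show "(\<lambda>x. x[j := t]) ` slice d a b j s \<subseteq> slice d a b j t"
      using list_update_mem_slice[of j d s a b t] j s t by blast
    show "(\<lambda>x. x[j := s]) ` slice d a b j t \<subseteq> slice d a b j s"
      using list_update_mem_slice[of j d t a b s] j s t by blast
  qed
  then show ?thesis by (rule bij_betw_same_card)
qed

lemma card_rectangle_eq:
  assumes j: "j < d" and c: "c \<in> {a j..b j}"
  shows "card (rectangle d a b) = card {a j..b j} * card (slice d a b j c)"
proof -
  have "card (rectangle d a b) = (\<Sum>t\<in>{a j..b j}. card (slice d a b j t))"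
    unfolding rectangle_eq_UN_slices[OF j]
    by (rule card_UN_disjoint) (auto simp: finite_slice disjoint_slices[OF j])
  also have "\<dots> = (\<Sum>t\<in>{a j..b j}. card (slice d a b j c))"
    using c by (intro sum.cong refl card_slice_eq[OF j]) auto
  finally show ?thesis by (simp only: sum_constant of_nat_id)
qed

lemma nbr_list_update_succ:
  assumes "j < length v"
  shows "nbr (length v) (v[j := r]) (v[j := r + 1])"
    and "nbr (length v) (v[j := r + 1]) (v[j := r])"
  using assms unfolding nbr_def by (auto intro!: exI[of _ j])

lemma not_nbr_self: "\<not> nbr d m m"
proof
  assume "nbr d m m"
  then obtain j where "j < length m" "m = m[j := m ! j + 1] \<or> m = m[j := m ! j - 1]"
    by (auto simp: nbr_def)
  then have "m ! j = m ! j + 1 \<or> m ! j = m ! j - 1" by (metis nth_list_update_eq)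
  then show False by simp
qed

lemma rel_perim_subsingleton:
  assumes "\<And>x y. x \<in> R \<Longrightarrow> y \<in> R \<Longrightarrow> x = y"
  shows "rel_perim d R X = 0"
proof -
  have "rel_edge_boundary d R X = {}"
  proof (rule equals0I)
    fix e assume "e \<in> rel_edge_boundary d R X"
    then obtain m n where "m \<in> R" "n \<in> R" "nbr d m n"
      by (auto simp: rel_edge_boundary_def edge_boundary_def)
    then show False using assms not_nbr_self by metis
  qed
  then show ?thesis by (simp add: rel_perim_eq_card)
qed

lemma nbr_leaving_rectangle:
  assumes m: "m \<in> rectangle d a b" and n: "n \<notin> rectangle d a b" and "nbr d m n"
  obtains j where "j < d" "m \<in> slice d a b j (b j)" "n = m[j := m ! j + 1]"
    | j where "j < d" "m \<in> slice d a b j (a j)" "n = m[j := m ! j - 1]"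
proof -
  from \<open>nbr d m n\<close> obtain j where j: "j < d"
    and step: "n = m[j := m ! j + 1] \<or> n = m[j := m ! j - 1]"
    unfolding nbr_def by blast
  have mj: "m ! j \<in> {a j..b j}" using coordinate_mem_interval[OF j m] .
  show thesis
  proof (cases "n = m[j := m ! j + 1]")
    case True
    then have "\<not> m ! j + 1 \<le> b j" using n list_update_mem_rectangle[OF m] mj by auto
    then have "m ! j = b j" using mj by simp
    then have "m \<in> slice d a b j (b j)" using slice_eq[OF j, of "b j" a b] m mj by simp
    with j True show thesis using that(1) by blast
  next
    case False
    then have up: "n = m[j := m ! j - 1]" using step by simp
    then have "\<not> a j \<le> m ! j - 1" using n list_update_mem_rectangle[OF m] mj by auto
    then have "m ! j = a j" using mj by simp
    then have "m \<in> slice d a b j (a j)" using slice_eq[OF j, of "a j" a b] m mj by simp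
    with j up show thesis using that(2) by blast
  qed
qed

section \<open>Counting along one coordinate axis\<close>

locale rectangle_axis =
  fixes d :: nat and a b :: "nat \<Rightarrow> int" and j :: nat and X :: "int list set"
  assumes axis: "j < d"
begin

definition transversal_edges :: "(int list \<times> int list) set" where
  "transversal_edges = {e \<in> rel_edge_boundary d (rectangle d a b) X. fst e ! j \<noteq> snd e ! j}"

text \<open>A line parallel to the axis is represented by its point in the slice \<open>x\<^sub>j = c\<close>.\<close>

definition mixed_lines :: "int \<Rightarrow> int list set" where
  "mixed_lines c = {u \<in> slice d a b j c.
     \<exists>s\<in>{a j..b j}. \<exists>t\<in>{a j..b j}. u[j := s] \<in> X \<and> u[j := t] \<notin> X}"

definition exits :: "int list set \<Rightarrow> (int list \<times> int) set" where
  "exits A = {(x, t). x \<in> A \<and> t \<in> {a j..b j} \<and> x[j := t] \<notin> X}"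

definition aligned_pairs :: "int list set \<Rightarrow> (int list \<times> int list) set" where
  "aligned_pairs A = {(x, y). x \<in> A \<and> y \<in> rectangle d a b - X \<and> x[j := y ! j] \<in> X}"

definition slice_pairs :: "(int list \<times> int list) set" where
  "slice_pairs = (\<Union>t\<in>{a j..b j}. (X \<inter> slice d a b j t) \<times> (slice d a b j t - X))"

lemma mem_slice_iff:
  "c \<in> {a j..b j} \<Longrightarrow> x \<in> slice d a b j c \<longleftrightarrow> x \<in> rectangle d a b \<and> x ! j = c"
  using slice_eq[OF axis, of c a b] by simp

lemma card_slices_eq:
  "s \<in> {a j..b j} \<Longrightarrow> t \<in> {a j..b j} \<Longrightarrow> card (slice d a b j s) = card (slice d a b j t)"
  using card_slice_eq[OF axis, of s a b t] by simp

lemma finite_transversal_edges: "finite transversal_edges"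
  using finite_rel_edge_boundary_rectangle by (simp add: transversal_edges_def)

lemma transversal_edge_on_line:
  assumes u: "u \<in> rectangle d a b" and s: "s \<in> {a j..b j}" and t: "t \<in> {a j..b j}"
    and "u[j := s] \<in> X" and "u[j := t] \<notin> X"
  shows "\<exists>e\<in>transversal_edges. (fst e)[j := u ! j] = u"
proof -
  obtain r where r: "min s t \<le> r" "r < max s t"
    and change: "(u[j := r] \<in> X) \<noteq> (u[j := r + 1] \<in> X)"
    using int_predicate_change_between[of "\<lambda>r. u[j := r] \<in> X" s t] assms by blast
  define v where "v = u[j := r]"
  define w where "w = u[j := r + 1]"
  have len: "length u = d" using u by (rule length_of_mem_rectangle)
  have "v \<in> rectangle d a b" "w \<in> rectangle d a b"
    using list_update_mem_rectangle[OF u] r s t by (auto simp: v_def w_def)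
  moreover have "nbr d v w" "nbr d w v"
    using nbr_list_update_succ[of j u r] axis len by (simp_all add: v_def w_def)
  moreover have "v ! j \<noteq> w ! j" using axis len by (simp add: v_def w_def)
  ultimately have "(v, w) \<in> transversal_edges \<or> (w, v) \<in> transversal_edges"
    using change by (auto simp: transversal_edges_def rel_edge_boundary_def edge_boundary_def
        v_def w_def)
  moreover have "v[j := u ! j] = u" "w[j := u ! j] = u" by (simp_all add: v_def w_def)
  ultimately show ?thesis by force
qed

lemma card_mixed_lines_le:
  assumes c: "c \<in> {a j..b j}"
  shows "card (mixed_lines c) \<le> card transversal_edges"
proof -
  have "mixed_lines c \<subseteq> (\<lambda>e. (fst e)[j := c]) ` transversal_edges"
  proof
    fix u assume "u \<in> mixed_lines c"
    then obtain s t where u: "u \<in> slice d a b j c" "s \<in> {a j..b j}" "t \<in> {a j..b j}"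
      "u[j := s] \<in> X" "u[j := t] \<notin> X"
      unfolding mixed_lines_def by blast
    then have "u \<in> rectangle d a b" "u ! j = c" using mem_slice_iff[OF c] by auto
    then show "u \<in> (\<lambda>e. (fst e)[j := c]) ` transversal_edges"
      using transversal_edge_on_line[OF _ u(2-5)] by force
  qed
  then show ?thesis
    using finite_transversal_edges by (meson card_image_le card_mono finite_imageI le_trans)
qed

lemma four_card_line_exits_le:
  "4 * card {(s, t). s \<in> {a j..b j} \<and> t \<in> {a j..b j} \<and> u[j := s] \<in> X \<and> u[j := t] \<notin> X}
     \<le> (card {a j..b j})\<^sup>2"
proof -
  define K where "K = {s \<in> {a j..b j}. u[j := s] \<in> X}"
  have "{(s, t). s \<in> {a j..b j} \<and> t \<in> {a j..b j} \<and> u[j := s] \<in> X \<and> u[j := t] \<notin> X}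
      = K \<times> ({a j..b j} - K)"
    by (auto simp: K_def)
  moreover have K: "K \<subseteq> {a j..b j}" by (auto simp: K_def)
  then have "card ({a j..b j} - K) = card {a j..b j} - card K"
    by (rule card_Diff_subset[OF finite_subset[OF K finite_atLeastAtMost_int]])
  moreover have "card K \<le> card {a j..b j}" by (rule card_mono[OF finite_atLeastAtMost_int K])
  ultimately show ?thesis by (simp add: card_cartesian_product four_mult_diff_le_square)
qed

lemma four_card_exits_le:
  assumes c: "c \<in> {a j..b j}"
  shows "4 * card (exits (X \<inter> rectangle d a b)) \<le> (card {a j..b j})\<^sup>2 * card (mixed_lines c)"
proof -
  define line_exits where "line_exits u =
    {(s, t). s \<in> {a j..b j} \<and> t \<in> {a j..b j} \<and> u[j := s] \<in> X \<and> u[j := t] \<notin> X}" for u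
  have finite_line_exits: "finite (line_exits u)" for u
    by (rule finite_subset[of _ "{a j..b j} \<times> {a j..b j}"]) (auto simp: line_exits_def)
  have finite_mixed_lines: "finite (mixed_lines c)"
    by (rule finite_subset[OF _ finite_slice]) (auto simp: mixed_lines_def)
  have "exits (X \<inter> rectangle d a b)
      \<subseteq> (\<Union>u\<in>mixed_lines c. (\<lambda>(s, t). (u[j := s], t)) ` line_exits u)"
  proof (clarify)
    fix x t assume "(x, t) \<in> exits (X \<inter> rectangle d a b)"
    then have x: "x \<in> X" "x \<in> rectangle d a b" and t: "t \<in> {a j..b j}" "x[j := t] \<notin> X"
      by (auto simp: exits_def)
    define u where "u = x[j := c]"
    have xj: "x ! j \<in> {a j..b j}" using coordinate_mem_interval[OF axis x(2)] .
    have "u \<in> slice d a b j c"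
      using x(2) c axis by (simp add: u_def mem_slice_iff list_update_mem_rectangle length_of_mem_rectangle)
    moreover have "u[j := x ! j] \<in> X" "u[j := t] \<notin> X" using x(1) t(2) by (simp_all add: u_def)
    ultimately have "u \<in> mixed_lines c" and "(x ! j, t) \<in> line_exits u"
      using xj t(1) unfolding mixed_lines_def line_exits_def by blast+
    then show "(x, t) \<in> (\<Union>u\<in>mixed_lines c. (\<lambda>(s, t). (u[j := s], t)) ` line_exits u)"
      by (force simp: u_def)
  qed
  then have "card (exits (X \<inter> rectangle d a b))
      \<le> card (\<Union>u\<in>mixed_lines c. (\<lambda>(s, t). (u[j := s], t)) ` line_exits u)"
    using finite_mixed_lines finite_line_exits by (intro card_mono) auto
  also have "\<dots> \<le> (\<Sum>u\<in>mixed_lines c. card ((\<lambda>(s, t). (u[j := s], t)) ` line_exits u))"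
    by (rule card_UN_le[OF finite_mixed_lines])
  also have "\<dots> \<le> (\<Sum>u\<in>mixed_lines c. card (line_exits u))"
    by (intro sum_mono card_image_le finite_line_exits)
  finally have "4 * card (exits (X \<inter> rectangle d a b)) \<le> (\<Sum>u\<in>mixed_lines c. 4 * card (line_exits u))"
    by (simp only: sum_distrib_left[symmetric])
  also have "\<dots> \<le> (\<Sum>u\<in>mixed_lines c. (card {a j..b j})\<^sup>2)"
    unfolding line_exits_def by (intro sum_mono four_card_line_exits_le)
  finally show ?thesis by (simp add: mult.commute)
qed

lemma card_exits_le:
  assumes c: "c \<in> {a j..b j}" and A: "A \<subseteq> X \<inter> slice d a b j c"
  shows "card (exits A) \<le> card (mixed_lines c) * card {a j..b j}"
proof -
  have "exits A \<subseteq> mixed_lines c \<times> {a j..b j}"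
  proof (clarify)
    fix x t assume "(x, t) \<in> exits A"
    then have "x \<in> X" "x \<in> slice d a b j c" "t \<in> {a j..b j}" "x[j := t] \<notin> X"
      using A by (auto simp: exits_def)
    moreover from this have "x[j := c] = x" using mem_slice_iff[OF c] by (metis list_update_id)
    ultimately show "x \<in> mixed_lines c \<and> t \<in> {a j..b j}"
      using c unfolding mixed_lines_def by (metis (no_types, lifting) mem_Collect_eq)
  qed
  then have "card (exits A) \<le> card (mixed_lines c \<times> {a j..b j})"
    by (intro card_mono) (auto intro: finite_subset[OF _ finite_slice] simp: mixed_lines_def)
  then show ?thesis by (simp add: card_cartesian_product)
qed

lemma finite_exits: "finite A \<Longrightarrow> finite (exits A)"
  by (rule finite_subset[of _ "A \<times> {a j..b j}"]) (auto simp: exits_def)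

lemma card_UN_exits_slices_le:
  assumes "finite A" and c: "c \<in> {a j..b j}"
  shows "card (\<Union>w\<in>exits A. {fst w} \<times> slice d a b j (snd w))
    \<le> card (exits A) * card (slice d a b j c)"
proof -
  have "card (\<Union>w\<in>exits A. {fst w} \<times> slice d a b j (snd w))
      \<le> (\<Sum>w\<in>exits A. card ({fst w} \<times> slice d a b j (snd w)))"
    by (rule card_UN_le[OF finite_exits[OF \<open>finite A\<close>]])
  also have "\<dots> = (\<Sum>w\<in>exits A. card (slice d a b j c))"
  proof (rule sum.cong[OF refl])
    fix w assume "w \<in> exits A"
    then have "snd w \<in> {a j..b j}" by (auto simp: exits_def)
    then have "card (slice d a b j (snd w)) = card (slice d a b j c)"
      using c by (rule card_slices_eq)
    then show "card ({fst w} \<times> slice d a b j (snd w)) = card (slice d a b j c)"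
      by (simp add: card_cartesian_product)
  qed
  finally show ?thesis by simp
qed

lemma card_product_le:
  assumes A: "A \<subseteq> rectangle d a b" and c: "c \<in> {a j..b j}"
  shows "card A * card (rectangle d a b - X)
    \<le> card (exits A) * card (slice d a b j c) + card (aligned_pairs A)"
proof -
  have finite_A: "finite A" using A finite_rectangle by (rule finite_subset)
  have finite_aligned: "finite (aligned_pairs A)"
    by (rule finite_subset[of _ "A \<times> rectangle d a b"])
      (auto simp: aligned_pairs_def finite_A finite_rectangle)
  have "A \<times> (rectangle d a b - X)
      \<subseteq> (\<Union>w\<in>exits A. {fst w} \<times> slice d a b j (snd w)) \<union> aligned_pairs A"
  proof (clarify)
    fix x y assume x: "x \<in> A" and y: "y \<in> rectangle d a b" "y \<notin> X"
      and "(x, y) \<notin> aligned_pairs A"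
    then have "(x, y ! j) \<in> exits A"
      using coordinate_mem_interval[OF axis y(1)] by (auto simp: exits_def aligned_pairs_def)
    moreover have "y \<in> slice d a b j (y ! j)" using mem_slice_coordinate[OF axis y(1)] .
    ultimately show "(x, y) \<in> (\<Union>w\<in>exits A. {fst w} \<times> slice d a b j (snd w))"
      by (intro UN_I[of "(x, y ! j)"]) auto
  qed
  then have "card (A \<times> (rectangle d a b - X))
      \<le> card ((\<Union>w\<in>exits A. {fst w} \<times> slice d a b j (snd w)) \<union> aligned_pairs A)"
    using finite_exits[OF finite_A] finite_aligned by (intro card_mono) (simp_all add: finite_slice)
  also have "\<dots> \<le> card (\<Union>w\<in>exits A. {fst w} \<times> slice d a b j (snd w)) + card (aligned_pairs A)"
    by (rule card_Un_le)
  also have "\<dots> \<le> card (exits A) * card (slice d a b j c) + card (aligned_pairs A)"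
    using card_UN_exits_slices_le[OF finite_A c] by simp
  finally show ?thesis by (simp add: card_cartesian_product)
qed

lemma finite_slice_pairs: "finite slice_pairs"
  by (simp add: slice_pairs_def finite_slice)

lemma card_slice_pairs:
  "card slice_pairs = (\<Sum>t\<in>{a j..b j}. card (X \<inter> slice d a b j t) * card (slice d a b j t - X))"
proof -
  have "card slice_pairs = (\<Sum>t\<in>{a j..b j}. card ((X \<inter> slice d a b j t) \<times> (slice d a b j t - X)))"
    unfolding slice_pairs_def
    by (rule card_UN_disjoint) (auto simp: finite_slice dest: disjoint_slices[OF axis, of _ a b])
  then show ?thesis by (simp add: card_cartesian_product)
qed

lemma card_aligned_pairs_slice_le:
  assumes c: "c \<in> {a j..b j}" and A: "A \<subseteq> slice d a b j c"
  shows "card (aligned_pairs A) \<le> card slice_pairs"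
proof (rule card_inj_on_le[OF _ _ finite_slice_pairs])
  show "inj_on (\<lambda>(x, y). (x[j := y ! j], y)) (aligned_pairs A)"
  proof (rule inj_onI)
    fix p q assume p: "p \<in> aligned_pairs A" and q: "q \<in> aligned_pairs A"
      and eq: "(\<lambda>(x, y). (x[j := y ! j], y)) p = (\<lambda>(x, y). (x[j := y ! j], y)) q"
    obtain x y x' y' where pq: "p = (x, y)" "q = (x', y')" by fastforce
    have "x ! j = c" "x' ! j = c"
      using p q A mem_slice_iff[OF c] by (auto simp: pq aligned_pairs_def)
    with eq show "p = q" by (simp add: pq) (metis list_update_id list_update_overwrite)
  qed
  show "(\<lambda>(x, y). (x[j := y ! j], y)) ` aligned_pairs A \<subseteq> slice_pairs"
  proof (clarify)
    fix x y assume "(x, y) \<in> aligned_pairs A"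
    then have x: "x \<in> rectangle d a b" and y: "y \<in> rectangle d a b" "y \<notin> X"
      and moved: "x[j := y ! j] \<in> X"
      using A slice_subset_rectangle[OF axis, of c a b] c by (auto simp: aligned_pairs_def)
    have t: "y ! j \<in> {a j..b j}" by (rule coordinate_mem_interval[OF axis y(1)])
    have "x[j := y ! j] \<in> slice d a b j (y ! j)"
      using t x axis
      by (simp add: mem_slice_iff list_update_mem_rectangle length_of_mem_rectangle)
    moreover have "y \<in> slice d a b j (y ! j)" using mem_slice_coordinate[OF axis y(1)] .
    ultimately show "(x[j := y ! j], y) \<in> slice_pairs"
      using t y(2) moved unfolding slice_pairs_def by blast
  qed
qed

lemma card_aligned_pairs_le:
  "card (aligned_pairs (X \<inter> rectangle d a b)) \<le> card {a j..b j} * card slice_pairs"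
proof -
  have "aligned_pairs (X \<inter> rectangle d a b) = (\<Union>c\<in>{a j..b j}. aligned_pairs (X \<inter> slice d a b j c))"
    using rectangle_eq_UN_slices[OF axis, of a b] by (auto simp: aligned_pairs_def)
  then have "card (aligned_pairs (X \<inter> rectangle d a b))
      \<le> (\<Sum>c\<in>{a j..b j}. card (aligned_pairs (X \<inter> slice d a b j c)))"
    by (simp add: card_UN_le)
  also have "\<dots> \<le> (\<Sum>c\<in>{a j..b j}. card slice_pairs)"
    by (intro sum_mono card_aligned_pairs_slice_le) auto
  finally show ?thesis by simp
qed

lemma card_transversal_edges_add_le:
  "card transversal_edges + (\<Sum>t\<in>{a j..b j}. rel_perim d (slice d a b j t) X)
    \<le> rel_perim d (rectangle d a b) X"
proof -
  let ?B = "\<lambda>t. rel_edge_boundary d (slice d a b j t) X"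
  have finite_B: "finite (?B t)" for t
    unfolding slice_def by (rule finite_rel_edge_boundary_rectangle)
  have "?B s \<inter> ?B t = {}" if "s \<in> {a j..b j}" "t \<in> {a j..b j}" "s \<noteq> t" for s t
    using disjoint_slices[OF axis, of s a b t] that by (auto simp: rel_edge_boundary_def)
  then have "(\<Sum>t\<in>{a j..b j}. rel_perim d (slice d a b j t) X) = card (\<Union>t\<in>{a j..b j}. ?B t)"
    unfolding rel_perim_eq_card by (intro card_UN_disjoint[symmetric]) (auto simp: finite_B)
  moreover have "transversal_edges \<inter> (\<Union>t\<in>{a j..b j}. ?B t) = {}"
    by (auto simp: transversal_edges_def rel_edge_boundary_def mem_slice_iff)
  moreover have "transversal_edges \<union> (\<Union>t\<in>{a j..b j}. ?B t) \<subseteq> rel_edge_boundary d (rectangle d a b) X"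
    using rel_edge_boundary_mono[OF slice_subset_rectangle[OF axis, of _ a b]]
    by (fastforce simp: transversal_edges_def)
  ultimately show ?thesis
    using finite_transversal_edges finite_B finite_rel_edge_boundary_rectangle
    by (simp add: rel_perim_eq_card card_Un_disjoint[symmetric] card_mono)
qed

lemma four_card_slice_pairs_le:
  assumes M: "0 \<le> M" and c: "c \<in> {a j..b j}"
    and slices: "\<And>t. t \<in> {a j..b j} \<Longrightarrow>
      4 * real (card (X \<inter> slice d a b j t)) * real (card (slice d a b j t - X))
        \<le> M * real (card (slice d a b j t)) * real (rel_perim d (slice d a b j t) X)"
  shows "4 * real (card slice_pairs) \<le> M * real (card (slice d a b j c))
    * (real (rel_perim d (rectangle d a b) X) - real (card transversal_edges))"
proof -
  have "4 * real (card slice_pairs) = (\<Sum>t\<in>{a j..b j}.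
      4 * real (card (X \<inter> slice d a b j t)) * real (card (slice d a b j t - X)))"
    by (simp add: card_slice_pairs sum_distrib_left mult.assoc)
  also have "\<dots> \<le> (\<Sum>t\<in>{a j..b j}.
      M * real (card (slice d a b j c)) * real (rel_perim d (slice d a b j t) X))"
  proof (rule sum_mono)
    fix t assume t: "t \<in> {a j..b j}"
    have "card (slice d a b j t) = card (slice d a b j c)" using t c by (rule card_slices_eq)
    with slices[OF t] show "4 * real (card (X \<inter> slice d a b j t)) * real (card (slice d a b j t - X))
        \<le> M * real (card (slice d a b j c)) * real (rel_perim d (slice d a b j t) X)"
      by simp
  qed
  also have "\<dots> = M * real (card (slice d a b j c))
      * real (\<Sum>t\<in>{a j..b j}. rel_perim d (slice d a b j t) X)"
    by (simp add: sum_distrib_left)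
  also have "\<dots> \<le> M * real (card (slice d a b j c))
      * (real (rel_perim d (rectangle d a b) X) - real (card transversal_edges))"
  proof (rule mult_left_mono)
    have "real (card transversal_edges) + real (\<Sum>t\<in>{a j..b j}. rel_perim d (slice d a b j t) X)
        \<le> real (rel_perim d (rectangle d a b) X)"
      using card_transversal_edges_add_le by (metis of_nat_add of_nat_le_iff)
    then show "real (\<Sum>t\<in>{a j..b j}. rel_perim d (slice d a b j t) X)
        \<le> real (rel_perim d (rectangle d a b) X) - real (card transversal_edges)"
      by linarith
  qed (use M in simp)
  finally show ?thesis .
qed

lemma four_card_product_le_of_slices:
  assumes M: "real (card {a j..b j}) \<le> M" and c: "c \<in> {a j..b j}"
    and slices: "\<And>t. t \<in> {a j..b j} \<Longrightarrow>
      4 * real (card (X \<inter> slice d a b j t)) * real (card (slice d a b j t - X))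
        \<le> M * real (card (slice d a b j t)) * real (rel_perim d (slice d a b j t) X)"
  shows "4 * real (card (X \<inter> rectangle d a b)) * real (card (rectangle d a b - X))
    \<le> M * real (card (rectangle d a b)) * real (rel_perim d (rectangle d a b) X)"
proof -
  define l where "l = real (card {a j..b j})"
  define w where "w = real (card (slice d a b j c))"
  define e where "e = real (card transversal_edges)"
  define B where "B = real (rel_perim d (rectangle d a b) X)"
  have "l \<ge> 0" "w \<ge> 0" "e \<ge> 0" by (simp_all add: l_def w_def e_def)
  have "M \<ge> 0" using M by (simp add: order_trans)
  have "e \<le> B" using card_transversal_edges_add_le by (simp add: e_def B_def)
  have split: "real (card (X \<inter> rectangle d a b)) * real (card (rectangle d a b - X))
      \<le> real (card (exits (X \<inter> rectangle d a b))) * w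
        + real (card (aligned_pairs (X \<inter> rectangle d a b)))"
    using card_product_le[of "X \<inter> rectangle d a b", OF _ c] unfolding w_def
    by (simp flip: of_nat_mult of_nat_add)
  have "4 * card (exits (X \<inter> rectangle d a b)) \<le> (card {a j..b j})\<^sup>2 * card transversal_edges"
    using four_card_exits_le[OF c] card_mixed_lines_le[OF c] by (meson le_trans mult_le_mono2)
  then have "real (4 * card (exits (X \<inter> rectangle d a b)))
      \<le> real ((card {a j..b j})\<^sup>2 * card transversal_edges)"
    by (rule of_nat_mono)
  then have exits: "4 * real (card (exits (X \<inter> rectangle d a b))) \<le> l\<^sup>2 * e"
    unfolding l_def e_def by simp
  have aligned: "real (card (aligned_pairs (X \<inter> rectangle d a b))) \<le> l * real (card slice_pairs)"
    using card_aligned_pairs_le unfolding l_def by (simp flip: of_nat_mult)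
  have pairs: "4 * real (card slice_pairs) \<le> M * w * (B - e)"
    using four_card_slice_pairs_le[OF \<open>M \<ge> 0\<close> c slices] unfolding w_def B_def e_def by simp
  have "4 * real (card (X \<inter> rectangle d a b)) * real (card (rectangle d a b - X))
      \<le> 4 * real (card (exits (X \<inter> rectangle d a b))) * w
        + l * (4 * real (card slice_pairs))"
    using split aligned by linarith
  also have "\<dots> \<le> l\<^sup>2 * e * w + l * (M * w * (B - e))"
    using exits pairs \<open>l \<ge> 0\<close> \<open>w \<ge> 0\<close> by (intro add_mono mult_right_mono mult_left_mono)
  also have "\<dots> \<le> M * l * w * e + M * l * w * (B - e)"
  proof -
    have "l * (l * e * w) \<le> M * (l * e * w)"
      using M \<open>w \<ge> 0\<close> \<open>e \<ge> 0\<close> unfolding l_def by (intro mult_right_mono) simp_all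
    then show ?thesis by (simp add: power2_eq_square algebra_simps)
  qed
  also have "\<dots> = M * (l * w) * B" by (simp add: algebra_simps)
  finally show ?thesis
    using card_rectangle_eq[OF axis, of c a b] c unfolding l_def w_def B_def by simp
qed

lemma four_card_face_product_le_of_slices:
  assumes M: "0 \<le> M" and c: "c \<in> {a j..b j}"
    and slices: "\<And>t. t \<in> {a j..b j} \<Longrightarrow>
      4 * real (card (X \<inter> slice d a b j t)) * real (card (slice d a b j t - X))
        \<le> M * real (card (slice d a b j t)) * real (rel_perim d (slice d a b j t) X)"
  shows "4 * real (card (X \<inter> slice d a b j c)) * real (card (rectangle d a b - X))
    \<le> (4 * real (card {a j..b j}) + M) * real (card (slice d a b j c))
        * real (rel_perim d (rectangle d a b) X)"
proof -
  define A where "A = X \<inter> slice d a b j c"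
  define l where "l = real (card {a j..b j})"
  define w where "w = real (card (slice d a b j c))"
  define e where "e = real (card transversal_edges)"
  define B where "B = real (rel_perim d (rectangle d a b) X)"
  have "l \<ge> 0" "w \<ge> 0" "e \<ge> 0" by (simp_all add: l_def w_def e_def)
  have "e \<le> B" using card_transversal_edges_add_le by (simp add: e_def B_def)
  have A: "A \<subseteq> rectangle d a b" using slice_subset_rectangle[OF axis, of c a b] c by (auto simp: A_def)
  have split: "real (card A) * real (card (rectangle d a b - X))
      \<le> real (card (exits A)) * w + real (card (aligned_pairs A))"
    using card_product_le[OF A c] unfolding w_def by (simp flip: of_nat_mult of_nat_add)
  have exits: "real (card (exits A)) \<le> e * l"
    using card_exits_le[OF c, of A] card_mixed_lines_le[OF c] unfolding A_def l_def e_def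
    by (simp flip: of_nat_mult) (meson le_trans mult_le_mono1)
  have aligned: "real (card (aligned_pairs A)) \<le> real (card slice_pairs)"
    using card_aligned_pairs_slice_le[OF c, of A] by (simp add: A_def)
  have pairs: "4 * real (card slice_pairs) \<le> M * w * (B - e)"
    using four_card_slice_pairs_le[OF M c slices] unfolding w_def B_def e_def by simp
  have "4 * real (card A) * real (card (rectangle d a b - X)) \<le> 4 * (e * l) * w + M * w * (B - e)"
    using split exits aligned pairs \<open>w \<ge> 0\<close> mult_right_mono[OF exits \<open>w \<ge> 0\<close>] by linarith
  also have "\<dots> \<le> 4 * (B * l) * w + M * w * B"
    using \<open>e \<le> B\<close> \<open>e \<ge> 0\<close> \<open>l \<ge> 0\<close> \<open>w \<ge> 0\<close> M
    by (intro add_mono mult_right_mono mult_left_mono) simp_all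
  also have "\<dots> = (4 * l + M) * w * B" by (simp add: algebra_simps)
  finally show ?thesis unfolding A_def l_def w_def B_def .
qed

end

section \<open>Isoperimetric bounds for rectangles\<close>

lemma four_card_product_le_of_sides_le:
  fixes M :: real
  assumes "\<forall>i<d. a i \<le> b i" and "\<forall>i<d. real_of_int (b i - a i + 1) \<le> M"
  shows "4 * real (card (X \<inter> rectangle d a b)) * real (card (rectangle d a b - X))
    \<le> M * real (card (rectangle d a b)) * real (rel_perim d (rectangle d a b) X)"
proof -
  have "\<forall>i. n \<le> i \<and> i < d \<longrightarrow> a i = b i \<Longrightarrow> \<forall>i<d. a i \<le> b i \<Longrightarrow>
      \<forall>i<d. real_of_int (b i - a i + 1) \<le> M \<Longrightarrow>
      4 * real (card (X \<inter> rectangle d a b)) * real (card (rectangle d a b - X))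
        \<le> M * real (card (rectangle d a b)) * real (rel_perim d (rectangle d a b) X)" for n
    \<comment> \<open>induction on the number of coordinates allowed to be nondegenerate\<close>
  proof (induction n arbitrary: a b)
    case 0
    then have single: "x = y" if "x \<in> rectangle d a b" "y \<in> rectangle d a b" for x y
      using rectangle_subsingleton[OF _ that] by blast
    then have "rel_perim d (rectangle d a b) X = 0" by (rule rel_perim_subsingleton)
    moreover have "X \<inter> rectangle d a b = {} \<or> rectangle d a b - X = {}" using single by blast
    then have "card (X \<inter> rectangle d a b) = 0 \<or> card (rectangle d a b - X) = 0"
      by (metis card.empty)
    ultimately show ?case by auto
  next
    case (Suc n)
    show ?case
    proof (cases "n < d")
      case False
      show ?thesis by (rule Suc.IH) (use False Suc.prems in auto)
    next
      case True
      interpret rectangle_axis d a b n X using True by unfold_locales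
      have "real_of_int (a n) \<le> real_of_int (b n)" "real_of_int (b n - a n + 1) \<le> M"
        using Suc.prems(2,3) True by simp_all
      then have "1 \<le> M" by simp
      show ?thesis
      proof (rule four_card_product_le_of_slices)
        show "real (card {a n..b n}) \<le> M" using Suc.prems True by auto
        show "a n \<in> {a n..b n}" using Suc.prems True by auto
        fix t assume t: "t \<in> {a n..b n}"
        show "4 * real (card (X \<inter> slice d a b n t)) * real (card (slice d a b n t - X))
          \<le> M * real (card (slice d a b n t)) * real (rel_perim d (slice d a b n t) X)"
          unfolding slice_def
        proof (rule Suc.IH)
          show "\<forall>i. n \<le> i \<and> i < d \<longrightarrow> (a(n := t)) i = (b(n := t)) i"
            using Suc.prems(1) by (simp add: Suc_le_eq)
          show "\<forall>i<d. (a(n := t)) i \<le> (b(n := t)) i" using Suc.prems(2) by simp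
          show "\<forall>i<d. real_of_int ((b(n := t)) i - (a(n := t)) i + 1) \<le> M"
            using Suc.prems(3) \<open>1 \<le> M\<close> by simp
        qed
      qed
    qed
  qed
  from this[of d] show ?thesis using assms by simp
qed

lemma face_product_le_balanced:
  assumes j: "j < d" and rho: "1 \<le> \<rho>" and bal: "balanced d \<rho> a b" and c: "c \<in> {a j..b j}"
  shows "real (card (X \<inter> slice d a b j c)) * real (card (rectangle d a b - X))
    \<le> (1 + \<rho> / 4) * real (card (rectangle d a b)) * real (rel_perim d (rectangle d a b) X)"
proof -
  interpret rectangle_axis d a b j X using j by unfold_locales
  have sides: "\<forall>i<d. a i \<le> b i"
    and ratio: "\<forall>i<d. real_of_int (b i - a i + 1) \<le> \<rho> * real_of_int (b j - a j + 1)"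
    using bal j by (auto simp: balanced_def)
  have side_j: "real (card {a j..b j}) = real_of_int (b j - a j + 1)" using sides j by simp
  have "(1::int) \<le> b j - a j + 1" using sides j by simp
  then have "1 \<le> real (card {a j..b j})" unfolding side_j by (metis of_int_1 of_int_le_iff)
  then have one: "1 \<le> \<rho> * real (card {a j..b j})"
    using mult_mono[OF rho \<open>1 \<le> real (card {a j..b j})\<close>] rho by simp
  have "4 * real (card (X \<inter> slice d a b j c)) * real (card (rectangle d a b - X))
      \<le> (4 * real (card {a j..b j}) + \<rho> * real (card {a j..b j})) * real (card (slice d a b j c))
        * real (rel_perim d (rectangle d a b) X)"
  proof (rule four_card_face_product_le_of_slices[OF _ c])
    show "0 \<le> \<rho> * real (card {a j..b j})" using one by linarith
    fix t assume t: "t \<in> {a j..b j}"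
    show "4 * real (card (X \<inter> slice d a b j t)) * real (card (slice d a b j t - X))
      \<le> \<rho> * real (card {a j..b j}) * real (card (slice d a b j t))
        * real (rel_perim d (slice d a b j t) X)"
      unfolding slice_def
    proof (rule four_card_product_le_of_sides_le)
      show "\<forall>i<d. (a(j := t)) i \<le> (b(j := t)) i" using sides by simp
      show "\<forall>i<d. real_of_int ((b(j := t)) i - (a(j := t)) i + 1) \<le> \<rho> * real (card {a j..b j})"
        using ratio one unfolding side_j by simp
    qed
  qed
  also have "\<dots> = (4 + \<rho>) * real (card (rectangle d a b)) * real (rel_perim d (rectangle d a b) X)"
    using card_rectangle_eq[OF j, of c a b] c by (simp add: algebra_simps)
  finally show ?thesis by (simp add: algebra_simps)
qed

lemma perim_le_rel_perim_add_faces: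
  assumes X: "X \<subseteq> rectangle d a b"
  shows "perim d X \<le> rel_perim d (rectangle d a b) X
    + (\<Sum>j<d. card (X \<inter> slice d a b j (b j)) + card (X \<inter> slice d a b j (a j)))"
proof -
  define up where "up j = (\<lambda>m. (m, m[j := m ! j + 1])) ` (X \<inter> slice d a b j (b j))" for j
  define down where "down j = (\<lambda>m. (m, m[j := m ! j - 1])) ` (X \<inter> slice d a b j (a j))" for j
  have finite_faces: "finite (X \<inter> slice d a b j t)" for j t by (simp add: finite_slice)
  have "edge_boundary d X \<subseteq> rel_edge_boundary d (rectangle d a b) X \<union> (\<Union>j<d. up j \<union> down j)"
  proof
    fix e assume "e \<in> edge_boundary d X"
    then obtain m n where e: "e = (m, n)" and m: "m \<in> X" "m \<in> rectangle d a b"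
      and "n \<notin> X" "nbr d m n"
      using X by (auto simp: edge_boundary_def)
    show "e \<in> rel_edge_boundary d (rectangle d a b) X \<union> (\<Union>j<d. up j \<union> down j)"
    proof (cases "n \<in> rectangle d a b")
      case True
      then show ?thesis
        using e m \<open>n \<notin> X\<close> \<open>nbr d m n\<close> by (simp add: rel_edge_boundary_def edge_boundary_def)
    next
      case False
      from \<open>nbr d m n\<close> show ?thesis
      proof (rule nbr_leaving_rectangle[OF m(2) False])
        fix j assume "j < d" "m \<in> slice d a b j (b j)" "n = m[j := m ! j + 1]"
        then show ?thesis using e m(1) unfolding up_def by blast
      next
        fix j assume "j < d" "m \<in> slice d a b j (a j)" "n = m[j := m ! j - 1]"
        then show ?thesis using e m(1) unfolding down_def by blast
      qed
    qed
  qed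
  then have "perim d X \<le> card (rel_edge_boundary d (rectangle d a b) X \<union> (\<Union>j<d. up j \<union> down j))"
    unfolding perim_def using finite_faces
    by (intro card_mono) (simp_all add: finite_rel_edge_boundary_rectangle up_def down_def)
  also have "\<dots> \<le> rel_perim d (rectangle d a b) X + (\<Sum>j<d. card (up j) + card (down j))"
    unfolding rel_perim_eq_card
    by (rule order_trans[OF card_Un_le add_left_mono],
        rule order_trans[OF card_UN_le[OF finite_lessThan] sum_mono[OF card_Un_le]])
  also have "\<dots> \<le> rel_perim d (rectangle d a b) X
      + (\<Sum>j<d. card (X \<inter> slice d a b j (b j)) + card (X \<inter> slice d a b j (a j)))"
    unfolding up_def down_def
    by (intro add_left_mono sum_mono add_mono card_image_le finite_faces)
  finally show ?thesis .
qed

lemma perim_mult_card_diff_le: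
  assumes rho: "1 \<le> \<rho>" and bal: "balanced d \<rho> a b" and X: "X \<subseteq> rectangle d a b"
  shows "real (perim d X) * real (card (rectangle d a b - X))
    \<le> (1 + 2 * real d * (1 + \<rho> / 4)) * real (card (rectangle d a b))
        * real (rel_perim d (rectangle d a b) X)"
proof -
  define N where "N = real (card (rectangle d a b - X))"
  define r where "r = real (card (rectangle d a b))"
  define B where "B = real (rel_perim d (rectangle d a b) X)"
  define f where "f j t = real (card (X \<inter> slice d a b j t))" for j t
  have "N \<le> r" "0 \<le> N" "0 \<le> B"
    using finite_rectangle by (simp_all add: N_def r_def B_def card_mono)
  have face: "f j t * N \<le> (1 + \<rho> / 4) * r * B" if "j < d" "t \<in> {a j, b j}" for j t
    using face_product_le_balanced[OF that(1) rho bal, of t X] that bal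
    by (auto simp: balanced_def f_def N_def r_def B_def)
  have "real (perim d X) \<le> B + (\<Sum>j<d. f j (b j) + f j (a j))"
    using perim_le_rel_perim_add_faces[OF X] unfolding B_def f_def
    by (metis (no_types, lifting) of_nat_add of_nat_le_iff of_nat_sum sum.cong)
  then have "real (perim d X) * N \<le> (B + (\<Sum>j<d. f j (b j) + f j (a j))) * N"
    using \<open>0 \<le> N\<close> by (rule mult_right_mono)
  also have "\<dots> = B * N + (\<Sum>j<d. f j (b j) * N + f j (a j) * N)"
    by (simp add: distrib_right sum_distrib_right)
  also have "\<dots> \<le> B * r + (\<Sum>j<d. 2 * ((1 + \<rho> / 4) * r * B))"
  proof (rule add_mono)
    show "B * N \<le> B * r" using \<open>N \<le> r\<close> \<open>0 \<le> B\<close> by (rule mult_left_mono)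
    show "(\<Sum>j<d. f j (b j) * N + f j (a j) * N) \<le> (\<Sum>j<d. 2 * ((1 + \<rho> / 4) * r * B))"
    proof (rule sum_mono)
      fix j assume "j \<in> {..<d}"
      then have "f j (b j) * N \<le> (1 + \<rho> / 4) * r * B" "f j (a j) * N \<le> (1 + \<rho> / 4) * r * B"
        using face by simp_all
      then show "f j (b j) * N + f j (a j) * N \<le> 2 * ((1 + \<rho> / 4) * r * B)" by linarith
    qed
  qed
  also have "\<dots> = (1 + 2 * real d * (1 + \<rho> / 4)) * r * B" by (simp add: algebra_simps)
  finally show ?thesis unfolding N_def r_def B_def .
qed

theorem lemma4p4:
  fixes d :: nat and \<rho> :: real and a b :: "nat \<Rightarrow> int" and X :: "int list set"
  assumes "d \<ge> 2" and "\<rho> \<ge> 1"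
    and "balanced d \<rho> a b"
    and "X \<subseteq> rectangle d a b"
  shows "real (rel_perim d (rectangle d a b) X) \<ge>
    real (perim d X) / (3 * real d * \<rho>) *
    (real (card (rectangle d a b - X)) / real (card (rectangle d a b)))"
proof -
  define p N r B where "p = real (perim d X)" and "N = real (card (rectangle d a b - X))"
    and "r = real (card (rectangle d a b))" and "B = real (rel_perim d (rectangle d a b) X)"
  \<comment> \<open>equivalent to \<open>1 \<le> d * (5/2 * \<rho> - 2)\<close>\<close>
  have coefficient: "1 + 2 * real d * (1 + \<rho> / 4) \<le> 3 * real d * \<rho>"
    using mult_mono[of 2 "real d" "1/2" "5/2 * \<rho> - 2"] assms(1,2) by (simp add: algebra_simps)
  have "p * N \<le> (1 + 2 * real d * (1 + \<rho> / 4)) * (r * B)"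
    using perim_mult_card_diff_le[OF assms(2-4)] by (simp add: p_def N_def r_def B_def mult.assoc)
  also have "\<dots> \<le> 3 * real d * \<rho> * (r * B)"
    using coefficient by (rule mult_right_mono) (simp add: r_def B_def)
  finally have "p * N \<le> B * (3 * real d * \<rho> * r)" by (simp add: mult_ac)
  moreover have "0 < r"
    using rectangle_nonempty finite_rectangle assms(3) by (auto simp: r_def balanced_def card_gt_0_iff)
  then have "0 < 3 * real d * \<rho> * r" using assms(1,2) by simp
  ultimately have "p / (3 * real d * \<rho>) * (N / r) \<le> B" by (simp add: pos_divide_le_eq)
  then show ?thesis unfolding p_def N_def r_def B_def .
qed

end
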